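(* Let $M=\{D_1,\dots,D_m\}$, $m\ge2$, be a 2-disk system consisting of pairwise distinct disks. Then $\bigcap_{k=1}^m D_k\neq\emptyset$ if and only if there exist indices $i\ne j$ with $D_i\cap D_j\ne\emptyset$ such that the point $d_{ij}$ satisfies $d_{ij}\in D_k$ for all $1\le k\le m$.
   Context: A 2-disk system is a finite collection of closed disks $D_i=D(c_i;r_i)=\{x\in\mathbb R^2:\|x-c_i\|\le r_i\}$ with $r_i>0$; $\partial D_i$ denotes the boundary circle $\{x:\|x-c_i\|=r_i\}$. Definition of $d_{ij}$: for $i\neq j$ with $D_i\cap D_j\ne\emptyset$, write $c_j-c_i=(a,b)$ and $\mathbf n_{ij}=(-b,a)$. (1) If $\partial D_i\cap\partial D_j\ne\emptyset$, $d_{ij}$ is the unique point of $\partial D_i\cap\partial D_j$ with $\langle d_{ij}-c_i,\mathbf n_{ij}\rangle\ge0$. (2) If $\partial D_i\cap\partial D_j=\emptyset$ (so $r_i\ne r_j$ and one disk lies in the interior of the other), let $\lambda=\|c_i-c_j\|/|r_i-r_j|$; then $d_{ij}$ is the unique point of $\partial D(c_i;\lambda r_i)\cap\partial D(c_j;\lambda r_j)$ (when $c_i=c_j$ this means $d_{ij}=c_i$). *)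

theory Defs
  imports "HOL-Analysis.Analysis"
begin

text \<open>Points of the plane are vectors of type real^2; the disk D(c;r) is cball c r,
its boundary circle is sphere c r.\<close>

definition nrm :: "real^2 \<Rightarrow> real^2 \<Rightarrow> real^2" where
  "nrm ci cj = vector [- ((cj - ci) $ 2), (cj - ci) $ 1]"

definition dpt :: "real^2 \<Rightarrow> real \<Rightarrow> real^2 \<Rightarrow> real \<Rightarrow> real^2" where
  "dpt ci ri cj rj =
     (if sphere ci ri \<inter> sphere cj rj \<noteq> {}
      then (THE d. d \<in> sphere ci ri \<inter> sphere cj rj \<and> inner (d - ci) (nrm ci cj) \<ge> 0)
      else (let l = dist ci cj / \<bar>ri - rj\<bar>
            in THE d. d \<in> sphere ci (l * ri) \<inter> sphere cj (l * rj)))"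

end

theory Submission
  imports Defs
begin

text \<open>Let \<open>K\<close> be the intersection of the disks. If \<open>K\<close> is nonempty, it is compact and not the
whole plane, so it has a frontier point, and every frontier point of \<open>K\<close> lies on some circle
\<open>\<partial>D\<^sub>i\<close>. If the whole circle \<open>\<partial>D\<^sub>i\<close> lies in \<open>K\<close>, then \<open>D\<^sub>i\<close> is contained in every disk
(a disk is the convex hull of its circle), and for any other disk \<open>D\<^sub>j \<supseteq> D\<^sub>i\<close> one of
\<open>d\<^sub>i\<^sub>j\<close>, \<open>d\<^sub>j\<^sub>i\<close> lies in \<open>D\<^sub>i\<close>. Otherwise, by connectedness of the circle, \<open>\<partial>D\<^sub>i\<close> meets the
frontier of the intersection of the other disks in a point \<open>y \<in> K\<close> lying on a second circle
\<open>\<partial>D\<^sub>k\<close>; and a common point of two distinct circles is \<open>d\<^sub>i\<^sub>k\<close> or \<open>d\<^sub>k\<^sub>i\<close>, according to the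
side of the line \<open>c\<^sub>ic\<^sub>k\<close> it lies on.\<close>

lemma frontier_Inter_cball_subset:
  fixes c :: "'i \<Rightarrow> 'a::metric_space"
  assumes "finite A"
  shows "frontier (\<Inter>k\<in>A. cball (c k) (r k)) \<subseteq> (\<Union>k\<in>A. sphere (c k) (r k))"
proof
  fix x assume x: "x \<in> frontier (\<Inter>k\<in>A. cball (c k) (r k))"
  have "closure (- (\<Inter>k\<in>A. cball (c k) (r k))) \<subseteq> (\<Union>k\<in>A. - ball (c k) (r k))"
    using assms by (intro closure_minimal) auto
  then obtain k where "k \<in> A" "x \<notin> ball (c k) (r k)"
    using x frontier_closures by blast
  moreover have "closed (\<Inter>k\<in>A. cball (c k) (r k))"
    by (simp add: closed_INT)
  then have "x \<in> (\<Inter>k\<in>A. cball (c k) (r k))"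
    using x frontier_subset_closed by blast
  ultimately show "x \<in> (\<Union>k\<in>A. sphere (c k) (r k))" by force
qed

lemma cball_subset_cball_if_sphere_subset:
  fixes a b :: "'a::euclidean_space"
  assumes "sphere a r \<subseteq> cball b s"
  shows "cball a r \<subseteq> cball b s"
proof -
  have "cball a r = convex hull (sphere a r)"
    using Krein_Milman_frontier[of "cball a r"] by simp
  also have "\<dots> \<subseteq> cball b s"
    using assms by (intro hull_minimal) (auto simp: convex_cball)
  finally show ?thesis .
qed

lemma Inter_cball_meets_sphere:
  fixes c :: "'i \<Rightarrow> 'a::euclidean_space"
  assumes "finite I" "I \<noteq> {}" "(\<Inter>k\<in>I. cball (c k) (r k)) \<noteq> {}"
  obtains i where "i \<in> I" "sphere (c i) (r i) \<inter> (\<Inter>k\<in>I. cball (c k) (r k)) \<noteq> {}"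
proof -
  let ?K = "\<Inter>k\<in>I. cball (c k) (r k)"
  obtain i0 where "i0 \<in> I"
    using assms(2) by blast
  then have "?K \<subseteq> cball (c i0) (r i0)"
    by blast
  then have "?K \<noteq> UNIV"
    using bounded_subset[OF bounded_cball] not_bounded_UNIV by metis
  then obtain x where x: "x \<in> frontier ?K"
    using assms(3) frontier_not_empty by blast
  have "closed ?K"
    by (simp add: closed_INT)
  then have "x \<in> ?K"
    using x frontier_subset_closed by blast
  moreover obtain i where "i \<in> I" "x \<in> sphere (c i) (r i)"
    using x frontier_Inter_cball_subset[OF assms(1)] by blast
  ultimately show ?thesis
    using that by blast
qed

lemma sphere_Int_sphere_internally_tangent:
  fixes a b :: "'a::real_inner"
  assumes "a \<noteq> b" "0 \<le> \<rho>"
  shows "sphere a \<rho> \<inter> sphere b (dist a b + \<rho>) = {a + (\<rho> / dist a b) *\<^sub>R (a - b)}"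
proof (intro equalityI subsetI)
  have "dist a b > 0"
    using assms(1) by simp
  fix d assume d: "d \<in> sphere a \<rho> \<inter> sphere b (dist a b + \<rho>)"
  then have "norm ((d - a) + (a - b)) = norm (d - a) + norm (a - b)"
    by (simp add: dist_norm norm_minus_commute)
  then have "norm (d - a) *\<^sub>R (a - b) = norm (a - b) *\<^sub>R (d - a)"
    by (simp only: norm_triangle_eq)
  then have "\<rho> *\<^sub>R (a - b) = dist a b *\<^sub>R (d - a)"
    using d by (simp add: dist_norm norm_minus_commute)
  then have "(1 / dist a b) *\<^sub>R (\<rho> *\<^sub>R (a - b)) = d - a"
    using \<open>dist a b > 0\<close> by simp
  then show "d \<in> {a + (\<rho> / dist a b) *\<^sub>R (a - b)}"
    by (simp add: algebra_simps)
next
  have "dist a b > 0"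
    using assms(1) by simp
  fix d assume "d \<in> {a + (\<rho> / dist a b) *\<^sub>R (a - b)}"
  then have "d - a = (\<rho> / dist a b) *\<^sub>R (a - b)"
    by simp
  moreover have "d - b = (\<rho> / dist a b + 1) *\<^sub>R (a - b)"
    using \<open>d - a = _\<close> by (simp add: algebra_simps)
  ultimately have "dist a d = \<rho>" "dist b d = dist a b + \<rho>"
    using \<open>dist a b > 0\<close> assms(2)
    by (simp_all add: dist_norm norm_minus_commute[of _ d] distrib_right)
  then show "d \<in> sphere a \<rho> \<inter> sphere b (dist a b + \<rho>)"
    by simp
qed

lemma nrm_nth: "nrm a b $ 1 = a $ 2 - b $ 2" "nrm a b $ 2 = b $ 1 - a $ 1"
  by (simp_all add: nrm_def)

lemma nrm_swap: "nrm b a = - nrm a b"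
  by (simp add: vec_eq_iff forall_2 nrm_nth)

lemma inner_nrm_self: "inner (b - a) (nrm a b) = 0"
  by (simp add: nrm_nth inner_vec_def sum_2 algebra_simps)

lemma inner_sq_add_inner_nrm_sq:
  fixes x a b :: "real^2"
  shows "(inner x (b - a))\<^sup>2 + (inner x (nrm a b))\<^sup>2 = (norm x * dist a b)\<^sup>2"
proof -
  have norm_sq: "(norm y)\<^sup>2 = (y$1)\<^sup>2 + (y$2)\<^sup>2" for y :: "real^2"
    unfolding power2_norm_eq_inner by (simp add: inner_vec_def sum_2 power2_eq_square)
  show ?thesis
    unfolding power_mult_distrib dist_norm norm_sq
    by (simp add: nrm_nth inner_vec_def sum_2 power2_eq_square algebra_simps)
qed

lemma sphere_Int_sphere_half_plane_unique:
  fixes a b d d' :: "real^2"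
  assumes "a \<noteq> b"
    and "d \<in> sphere a r \<inter> sphere b s" "d' \<in> sphere a r \<inter> sphere b s"
    and "inner (d - a) (nrm a b) \<ge> 0" "inner (d' - a) (nrm a b) \<ge> 0"
  shows "d = d'"
proof -
  define u v where "u = d - a" and "v = d' - a"
  have "norm u = norm v" "norm (u - (b - a)) = norm (v - (b - a))"
    using assms(2,3) by (auto simp: u_def v_def dist_norm norm_minus_commute)
  then have along: "inner u (b - a) = inner v (b - a)"
    by (simp add: norm_eq inner_diff inner_commute)
  have "(inner u (nrm a b))\<^sup>2 = (inner v (nrm a b))\<^sup>2"
    using inner_sq_add_inner_nrm_sq[where x = u] inner_sq_add_inner_nrm_sq[where x = v]
      along \<open>norm u = norm v\<close> by (metis add_left_cancel)
  then have across: "inner u (nrm a b) = inner v (nrm a b)"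
    using assms(4,5) by (simp add: u_def v_def)
  have "(norm (u - v) * dist a b)\<^sup>2 = 0"
    using inner_sq_add_inner_nrm_sq[where x = "u - v" and a = a and b = b] along across
    by (simp add: inner_diff_left)
  then show ?thesis
    using assms(1) by (simp add: u_def v_def)
qed

lemma dpt_eq_if_half_plane:
  assumes "a \<noteq> b" "y \<in> sphere a r \<inter> sphere b s" "inner (y - a) (nrm a b) \<ge> 0"
  shows "dpt a r b s = y"
proof -
  have "(THE d. d \<in> sphere a r \<inter> sphere b s \<and> inner (d - a) (nrm a b) \<ge> 0) = y"
    using assms sphere_Int_sphere_half_plane_unique by (intro the_equality) blast+
  then show ?thesis
    using assms(2) by (auto simp: dpt_def)
qed

lemma dpt_eq_common_point:
  assumes "y \<in> sphere a r \<inter> sphere b s" "cball a r \<noteq> cball b s"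
  shows "dpt a r b s = y \<or> dpt b s a r = y"
proof -
  have "a \<noteq> b"
    using assms by auto
  show ?thesis
  proof (cases "inner (y - a) (nrm a b) \<ge> 0")
    case True
    have "dpt a r b s = y"
      using \<open>a \<noteq> b\<close> assms(1) True by (rule dpt_eq_if_half_plane)
    then show ?thesis ..
  next
    case False
    have "inner (y - b) (nrm b a) = - inner (y - a) (nrm a b)"
      using inner_nrm_self[of a b] by (simp add: nrm_swap[of a b] inner_diff_left)
    with False have "inner (y - b) (nrm b a) \<ge> 0"
      by simp
    then have "dpt b s a r = y"
      using assms(1) by (intro dpt_eq_if_half_plane[OF \<open>a \<noteq> b\<close>[symmetric]]) auto
    then show ?thesis ..
  qed
qed

lemma dpt_mem_cball_if_nested:
  assumes "cball a r \<subseteq> cball b s" "cball a r \<noteq> cball b s" "0 \<le> r"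
    and "sphere a r \<inter> sphere b s = {}"
  shows "dpt a r b s \<in> cball a r"
proof -
  have le: "dist a b + r \<le> s"
    using assms(1,3) cball_subset_cball_iff by fastforce
  have "r < s"
  proof (rule ccontr)
    assume "\<not> r < s"
    then have "dist a b = 0" "r = s"
      using le zero_le_dist[of a b] by linarith+
    with assms(2) show False
      by simp
  qed
  define l where "l = dist a b / \<bar>r - s\<bar>"
  have l: "0 \<le> l" "l \<le> 1" "l * s = dist a b + l * r"
    using le \<open>r < s\<close> by (auto simp: l_def field_simps)
  obtain w where w: "sphere a (l * r) \<inter> sphere b (l * s) = {w}"
  proof (cases "a = b")
    case True
    then have "l = 0"
      by (simp add: l_def)
    with True show ?thesis
      using that by simp
  next
    case False
    then show ?thesis
      using that sphere_Int_sphere_internally_tangent[OF False, of "l * r"] l assms(3) by simp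
  qed
  have "dpt a r b s = (THE d. d \<in> sphere a (l * r) \<inter> sphere b (l * s))"
    using assms(4) by (simp add: dpt_def l_def)
  also have "\<dots> = w"
    unfolding w by simp
  finally have "dpt a r b s = w" .
  moreover have "w \<in> sphere a (l * r)"
    using w by blast
  then have "dist a w \<le> r"
    using l assms(3) by (simp add: mult_left_le_one_le)
  ultimately show ?thesis
    by simp
qed

lemma dpt_mem_smaller_disk:
  assumes "cball a r \<subseteq> cball b s" "cball a r \<noteq> cball b s" "0 \<le> r"
  shows "dpt a r b s \<in> cball a r \<or> dpt b s a r \<in> cball a r"
proof (cases "sphere a r \<inter> sphere b s = {}")
  case True
  then show ?thesis
    using dpt_mem_cball_if_nested[OF assms] by simp
next
  case False
  then obtain y where "y \<in> sphere a r \<inter> sphere b s"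
    by blast
  then show ?thesis
    using dpt_eq_common_point[OF _ assms(2)] by fastforce
qed

lemma dpt_mem_Inter_if_sphere_subset:
  fixes c :: "'i \<Rightarrow> real^2"
  assumes "i \<in> I" "j \<in> I" "0 \<le> r i" "cball (c i) (r i) \<noteq> cball (c j) (r j)"
    and "sphere (c i) (r i) \<subseteq> (\<Inter>k\<in>I. cball (c k) (r k))"
  shows "dpt (c i) (r i) (c j) (r j) \<in> (\<Inter>k\<in>I. cball (c k) (r k)) \<or>
    dpt (c j) (r j) (c i) (r i) \<in> (\<Inter>k\<in>I. cball (c k) (r k))"
proof -
  have smallest: "cball (c i) (r i) \<subseteq> (\<Inter>k\<in>I. cball (c k) (r k))"
    using assms(5) by (intro INT_greatest cball_subset_cball_if_sphere_subset) auto
  then have "cball (c i) (r i) \<subseteq> cball (c j) (r j)"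
    using assms(2) by blast
  then have "dpt (c i) (r i) (c j) (r j) \<in> cball (c i) (r i) \<or>
      dpt (c j) (r j) (c i) (r i) \<in> cball (c i) (r i)"
    by (rule dpt_mem_smaller_disk[OF _ assms(4,3)])
  then show ?thesis
    using smallest by (meson in_mono)
qed

lemma dpt_mem_Inter_if_sphere_not_subset:
  fixes c :: "'i \<Rightarrow> real^2"
  assumes "finite I" "i \<in> I" "\<And>k. k \<in> I \<Longrightarrow> k \<noteq> i \<Longrightarrow> cball (c i) (r i) \<noteq> cball (c k) (r k)"
    and "sphere (c i) (r i) \<inter> (\<Inter>k\<in>I. cball (c k) (r k)) \<noteq> {}"
    and "\<not> sphere (c i) (r i) \<subseteq> (\<Inter>k\<in>I. cball (c k) (r k))"
  obtains k where "k \<in> I" "k \<noteq> i"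
    "dpt (c i) (r i) (c k) (r k) \<in> (\<Inter>k\<in>I. cball (c k) (r k)) \<or>
     dpt (c k) (r k) (c i) (r i) \<in> (\<Inter>k\<in>I. cball (c k) (r k))"
proof -
  define K' where "K' = (\<Inter>k\<in>I - {i}. cball (c k) (r k))"
  have K: "(\<Inter>k\<in>I. cball (c k) (r k)) = cball (c i) (r i) \<inter> K'"
    using assms(2) by (auto simp: K'_def)
  have "sphere (c i) (r i) \<inter> frontier K' \<noteq> {}"
  proof (rule connected_Int_frontier)
    show "connected (sphere (c i) (r i))"
      by (simp add: connected_sphere)
    show "sphere (c i) (r i) \<inter> K' \<noteq> {}" "sphere (c i) (r i) - K' \<noteq> {}"
      using assms(4,5) unfolding K by auto
  qed
  then obtain y k where y: "y \<in> sphere (c i) (r i)" "y \<in> frontier K'"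
    and k: "k \<in> I - {i}" "y \<in> sphere (c k) (r k)"
    using frontier_Inter_cball_subset[of "I - {i}" c r] assms(1) unfolding K'_def by blast
  have "closed K'"
    by (simp add: K'_def closed_INT)
  then have "y \<in> K'"
    using y(2) frontier_subset_closed by blast
  then have "y \<in> (\<Inter>k\<in>I. cball (c k) (r k))"
    using y(1) unfolding K by simp
  moreover have "dpt (c i) (r i) (c k) (r k) = y \<or> dpt (c k) (r k) (c i) (r i) = y"
    using y(1) k assms(3) by (intro dpt_eq_common_point) auto
  ultimately show ?thesis
    using that k(1) by blast
qed

lemma dpt_mem_Inter_cball:
  fixes c :: "'i \<Rightarrow> real^2"
  assumes "finite I" "2 \<le> card I" "\<And>k. k \<in> I \<Longrightarrow> 0 \<le> r k"
    and "\<And>i j. i \<in> I \<Longrightarrow> j \<in> I \<Longrightarrow> i \<noteq> j \<Longrightarrow> cball (c i) (r i) \<noteq> cball (c j) (r j)"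
    and "(\<Inter>k\<in>I. cball (c k) (r k)) \<noteq> {}"
  obtains i j where "i \<in> I" "j \<in> I" "i \<noteq> j" "dpt (c i) (r i) (c j) (r j) \<in> (\<Inter>k\<in>I. cball (c k) (r k))"
proof -
  let ?K = "\<Inter>k\<in>I. cball (c k) (r k)"
  have "I \<noteq> {}"
    using assms(2) by auto
  then obtain i where i: "i \<in> I" "sphere (c i) (r i) \<inter> ?K \<noteq> {}"
    using Inter_cball_meets_sphere[OF assms(1) _ assms(5)] by blast
  have distinct: "cball (c i) (r i) \<noteq> cball (c k) (r k)" if "k \<in> I" "k \<noteq> i" for k
    using assms(4)[OF i(1) that(1)] that(2) by blast
  obtain j where j: "j \<in> I" "j \<noteq> i"
    "dpt (c i) (r i) (c j) (r j) \<in> ?K \<or> dpt (c j) (r j) (c i) (r i) \<in> ?K"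
  proof (cases "sphere (c i) (r i) \<subseteq> ?K")
    case True
    have "\<not> I \<subseteq> {i}"
      using assms(2) card_mono[of "{i}" I] by auto
    then obtain j where "j \<in> I" "j \<noteq> i"
      by blast
    then have "dpt (c i) (r i) (c j) (r j) \<in> ?K \<or> dpt (c j) (r j) (c i) (r i) \<in> ?K"
      using assms(3)[OF i(1)] distinct True by (intro dpt_mem_Inter_if_sphere_subset[OF i(1)])
    then show ?thesis
      by (rule that[OF \<open>j \<in> I\<close> \<open>j \<noteq> i\<close>])
  next
    case False
    show ?thesis
      using dpt_mem_Inter_if_sphere_not_subset[OF assms(1) i(1) distinct i(2) False] that by blast
  qed
  from j(3) show ?thesis
  proof
    assume "dpt (c i) (r i) (c j) (r j) \<in> ?K"
    then show ?thesis
      by (rule that[OF i(1) j(1) j(2)[symmetric]])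
  next
    assume "dpt (c j) (r j) (c i) (r i) \<in> ?K"
    then show ?thesis
      by (rule that[OF j(1) i(1) j(2)])
  qed
qed

theorem lemma4p1:
  fixes c :: "nat \<Rightarrow> real^2" and r :: "nat \<Rightarrow> real" and m :: nat
  assumes "m \<ge> 2"
    and "\<forall>k\<in>{1..m}. r k > 0"
    and "\<forall>i\<in>{1..m}. \<forall>j\<in>{1..m}. i \<noteq> j \<longrightarrow> cball (c i) (r i) \<noteq> cball (c j) (r j)"
  shows "(\<Inter>k\<in>{1..m}. cball (c k) (r k)) \<noteq> {} \<longleftrightarrow>
    (\<exists>i\<in>{1..m}. \<exists>j\<in>{1..m}. i \<noteq> j \<and> cball (c i) (r i) \<inter> cball (c j) (r j) \<noteq> {} \<and>
       (\<forall>k\<in>{1..m}. dpt (c i) (r i) (c j) (r j) \<in> cball (c k) (r k)))" (is "?K \<noteq> {} \<longleftrightarrow> ?R")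
proof
  assume ?R
  then show "?K \<noteq> {}" by blast
next
  assume "?K \<noteq> {}"
  moreover have "2 \<le> card {1..m}"
    using assms(1) by simp
  moreover have "0 \<le> r k" if "k \<in> {1..m}" for k
    using assms(2) that by (simp add: less_imp_le)
  ultimately obtain i j where ij: "i \<in> {1..m}" "j \<in> {1..m}" "i \<noteq> j"
      "dpt (c i) (r i) (c j) (r j) \<in> ?K"
    using dpt_mem_Inter_cball[where I = "{1..m}" and c = c and r = r] assms(3) by blast
  show ?R
  proof (rule bexI[OF _ ij(1)], rule bexI[OF _ ij(2)])
    show "i \<noteq> j \<and> cball (c i) (r i) \<inter> cball (c j) (r j) \<noteq> {} \<and>
        (\<forall>k\<in>{1..m}. dpt (c i) (r i) (c j) (r j) \<in> cball (c k) (r k))"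
      using ij by blast
  qed
qed

end
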